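(* Let $d,\ell,r,s\in\mathbb{N}$ with $d\ge\ell$, let $T\subseteq\mathbb{F}$ be a subset of size $n$, and let $r=s-\lfloor\frac{d-\ell}{n}\rfloor$. Let $Q,R\in\mathbb{F}[x]$ be univariate polynomials of degree at most $\ell$, and let $g\colon T\to\mathbb{F}_{<r}[z]$ and $w\colon T\times[r]\to\mathbb{Z}_{\ge0}$ be functions such that $w(a,i)\le\frac n2\big((s-i)-\frac{d-\ell}{n}\big)$ for every $(a,i)\in T\times[r]$. If $Q\ne R$, then \[\Gamma^{s,d,\ell}_w(g,Q)+\Gamma^{s,d,\ell}_w(g,R)\ge n^2\Big(s-\frac dn\Big).\]
   Context: $\mathbb{F}$ is a field, $[r]=\{0,1,\dots,r-1\}$, and $\mathbb{F}_{<r}[z]$ denotes polynomials of degree $<r$. For a polynomial $R$ of degree at most $\ell$, for $i\in[r+1]$ let $A_i(g,R)=\{a\in T:\max\{j\in[r+1]: g(a)\equiv R(a+z)\bmod\langle z\rangle^j\}=i\}$. Define \[\Gamma^{s,d,\ell}_w(g,R)=\sum_{i=0}^{r-1}\sum_{a\in A_i(g,R)}\max\Big\{n\Big((s-i)-\tfrac{d-\ell}{n}\Big)-w(a,i),\ \max_{j<i}w(a,j)\Big\}+\sum_{a\in A_r(g,R)}\max_{j<r}w(a,j),\] where a maximum over an empty index set is ignored (taken as $0$). *)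

theory Defs
  imports "HOL-Computational_Algebra.Polynomial"
begin

text \<open>Maximal j in [r+1] = {0..r} with g(a) = R(a+z) mod <z>^j.
  R(a+z) is the composition of R with the polynomial a + z.\<close>
definition agree_level :: "('a::field \<Rightarrow> 'a poly) \<Rightarrow> 'a poly \<Rightarrow> nat \<Rightarrow> 'a \<Rightarrow> nat" where
  "agree_level g R r a =
     Max {j. j \<le> r \<and> monom 1 j dvd (g a - pcompose R [:a, 1:])}"

definition A_set :: "'a set \<Rightarrow> ('a::field \<Rightarrow> 'a poly) \<Rightarrow> 'a poly \<Rightarrow> nat \<Rightarrow> nat \<Rightarrow> 'a set" where
  "A_set T g R r i = {a \<in> T. agree_level g R r a = i}"

definition max_w_below :: "('a \<Rightarrow> nat \<Rightarrow> nat) \<Rightarrow> 'a \<Rightarrow> nat \<Rightarrow> nat" where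
  "max_w_below w a i = (if i = 0 then 0 else Max {w a j | j. j < i})"

definition Gamma :: "'a set \<Rightarrow> nat \<Rightarrow> nat \<Rightarrow> nat \<Rightarrow> nat \<Rightarrow> ('a \<Rightarrow> nat \<Rightarrow> nat)
    \<Rightarrow> ('a::field \<Rightarrow> 'a poly) \<Rightarrow> 'a poly \<Rightarrow> real" where
  "Gamma T r s d l w g R =
    (let n = real (card T) in
     (\<Sum>i<r. \<Sum>a\<in>A_set T g R r i.
        max (n * ((real s - real i) - (real d - real l) / n) - real (w a i))
            (real (max_w_below w a i)))
     + (\<Sum>a\<in>A_set T g R r r. real (max_w_below w a r)))"

end

theory Submission
  imports Defs
begin

text \<open>At a point \<open>a \<in> T\<close> with agreement levels \<open>i\<close> (for \<open>Q\<close>) and \<open>j\<close> (for \<open>R\<close>), the two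
  summands of \<open>\<Gamma>(g,Q) + \<Gamma>(g,R)\<close> add up to at least \<open>X(min i j)\<close>, where
  \<open>X k = n((s - k) - (d - l)/n)\<close>: if \<open>i < j\<close>, the \<open>R\<close>-summand pays \<open>w(a,i)\<close> back to the
  \<open>Q\<close>-summand \<open>X i - w(a,i)\<close>; if \<open>i = j < r\<close>, the weight bound \<open>2 w(a,i) \<le> X i\<close> is used; and
  \<open>X r \<le> 0\<close> by the choice of \<open>r\<close>. On the other hand \<open>g(a)\<close> agrees with both \<open>Q(a+z)\<close> and
  \<open>R(a+z)\<close> modulo \<open>z^(min i j)\<close>, so \<open>a\<close> is a root of \<open>R - Q\<close> of that multiplicity, and the
  minima sum to at most \<open>deg (R - Q) \<le> l\<close>. Summing \<open>X\<close> over \<open>T\<close> gives the bound.\<close>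

lemma pcompose_monom_shift:
  "pcompose (monom (1::'a::comm_ring_1) m) [:-a, 1:] = [:-a, 1:] ^ m"
proof (induction m)
  case 0
  then show ?case by (simp add: monom_altdef pcompose_1)
next
  case (Suc m)
  have "monom (1::'a) (Suc m) = [:0, 1:] * monom 1 m" by (simp add: monom_altdef)
  then show ?case using Suc by (simp add: pcompose_mult pcompose_pCons)
qed

lemma power_dvd_if_monom_dvd_pcompose_shift:
  fixes P :: "'a::comm_ring_1 poly"
  assumes "monom 1 m dvd pcompose P [:a, 1:]"
  shows "[:-a, 1:] ^ m dvd P"
proof -
  obtain k where k: "pcompose P [:a, 1:] = monom 1 m * k"
    using assms by (auto elim: dvdE)
  have "pcompose [:a, 1:] [:-a, 1:] = [:0, 1::'a:]" by (simp add: pcompose_pCons)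
  then have "P = pcompose (pcompose P [:a, 1:]) [:-a, 1:]"
    by (simp add: pcompose_assoc [symmetric])
  also have "\<dots> = [:-a, 1:] ^ m * pcompose k [:-a, 1:]"
    by (simp add: k pcompose_mult pcompose_monom_shift)
  finally show ?thesis by (metis dvd_triv_left)
qed

lemma sum_root_multiplicities_le_degree:
  fixes p :: "'a::idom poly"
  assumes "p \<noteq> 0" "finite T" "\<And>a. a \<in> T \<Longrightarrow> [:-a, 1:] ^ m a dvd p"
  shows "(\<Sum>a\<in>T. m a) \<le> degree p"
proof -
  let ?Z = "{x. poly p x = 0}"
  have m_le_order: "m a \<le> order a p" if "a \<in> T" for a
    using dvd_imp_order_le [OF assms(1) assms(3) [OF that], of a] by (simp add: order_power_n_n)
  have "(\<Sum>a\<in>T. m a) = (\<Sum>a\<in>T \<inter> ?Z. m a)"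
  proof (rule sum.mono_neutral_right [OF assms(2)])
    show "\<forall>a\<in>T - T \<inter> ?Z. m a = 0"
      using assms(1) by (force simp: order_root dest: m_le_order)
  qed auto
  also have "\<dots> \<le> (\<Sum>a\<in>T \<inter> ?Z. order a p)" by (rule sum_mono) (auto intro: m_le_order)
  also have "\<dots> \<le> (\<Sum>a\<in>?Z. order a p)"
    using poly_roots_finite [OF assms(1)] by (intro sum_mono2) auto
  also have "\<dots> \<le> degree p" by (rule sum_order_le_degree [OF assms(1)])
  finally show ?thesis .
qed

lemma sum_common_agreement_le_degree:
  fixes P Q :: "'a::field poly" and f :: "'a \<Rightarrow> 'a poly"
  assumes "P \<noteq> Q" "finite T"
    and "\<And>a. a \<in> T \<Longrightarrow> monom 1 (m a) dvd (f a - pcompose P [:a, 1:])"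
    and "\<And>a. a \<in> T \<Longrightarrow> monom 1 (m a) dvd (f a - pcompose Q [:a, 1:])"
  shows "(\<Sum>a\<in>T. m a) \<le> degree (P - Q)"
proof (rule sum_root_multiplicities_le_degree)
  show "P - Q \<noteq> 0" using assms(1) by simp
  show "[:-a, 1:] ^ m a dvd P - Q" if "a \<in> T" for a
  proof (rule power_dvd_if_monom_dvd_pcompose_shift)
    have "monom 1 (m a) dvd (f a - pcompose Q [:a, 1:]) - (f a - pcompose P [:a, 1:])"
      using assms(3,4) [OF that] by (rule dvd_diff [rotated])
    then show "monom 1 (m a) dvd pcompose (P - Q) [:a, 1:]" by (simp add: pcompose_diff)
  qed
qed fact

lemma agree_level_le: "agree_level g R r a \<le> r"
  and monom_agree_level_dvd: "monom 1 (agree_level g R r a) dvd (g a - pcompose R [:a, 1:])"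
proof -
  let ?S = "{j. j \<le> r \<and> monom 1 j dvd (g a - pcompose R [:a, 1:])}"
  have "finite ?S" by (rule finite_subset [of _ "{..r}"]) auto
  moreover have "0 \<in> ?S" by (simp add: monom_altdef)
  ultimately have "Max ?S \<in> ?S" by (intro Max_in) auto
  then show "agree_level g R r a \<le> r" "monom 1 (agree_level g R r a) dvd (g a - pcompose R [:a, 1:])"
    unfolding agree_level_def by simp_all
qed

lemma monom_dvd_if_le_agree_level:
  fixes g :: "'a::field \<Rightarrow> 'a poly"
  assumes "k \<le> agree_level g R r a"
  shows "monom 1 k dvd (g a - pcompose R [:a, 1:])"
proof -
  have "monom (1::'a) k dvd monom 1 (agree_level g R r a)"
    using assms by (simp add: monom_altdef le_imp_power_dvd)
  then show ?thesis using monom_agree_level_dvd dvd_trans by blast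
qed

lemma le_max_w_below: "j < i \<Longrightarrow> w a j \<le> max_w_below w a i"
  unfolding max_w_below_def by (auto intro!: Max_ge simp: setcompr_eq_image)

definition level_cost :: "(nat \<Rightarrow> real) \<Rightarrow> ('a \<Rightarrow> nat \<Rightarrow> nat) \<Rightarrow> nat \<Rightarrow> 'a \<Rightarrow> nat \<Rightarrow> real" where
  "level_cost X w r a i =
     (if i < r then max (X i - real (w a i)) (real (max_w_below w a i))
      else real (max_w_below w a i))"

lemma Gamma_eq_sum_level_cost:
  assumes "finite T"
  shows "Gamma T r s d l w g R =
    (\<Sum>a\<in>T. level_cost (\<lambda>i. real (card T) * ((real s - real i) - (real d - real l) / real (card T)))
                       w r a (agree_level g R r a))"
    (is "_ = (\<Sum>a\<in>T. ?c a)")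
proof -
  have "(\<Sum>a\<in>T. ?c a) = (\<Sum>i\<in>{..r}. \<Sum>a\<in>A_set T g R r i. ?c a)"
    unfolding A_set_def by (rule sum.group [symmetric]) (use assms agree_level_le in auto)
  also have "\<dots> = (\<Sum>a\<in>A_set T g R r r. ?c a) + (\<Sum>i<r. \<Sum>a\<in>A_set T g R r i. ?c a)"
    by (simp add: lessThan_Suc_atMost [symmetric])
  also have "\<dots> = Gamma T r s d l w g R"
    unfolding Gamma_def by (simp add: A_set_def level_cost_def Let_def)
  finally show ?thesis ..
qed

lemma level_cost_pair_ge:
  assumes "i \<le> r" "j \<le> r" "\<And>k. k < r \<Longrightarrow> 2 * real (w a k) \<le> X k" "X r \<le> 0"
  shows "X (min i j) \<le> level_cost X w r a i + level_cost X w r a j"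
  using assms
proof (induction i j rule: linorder_wlog)
  case (le i j)
  show ?case
  proof (cases "i < j")
    case True
    have "X i - real (w a i) \<le> level_cost X w r a i"
      using True le.prems(2) by (simp add: level_cost_def)
    moreover have "real (w a i) \<le> level_cost X w r a j"
      using le_max_w_below [OF True, of w a] by (simp add: level_cost_def le_max_iff_disj)
    ultimately show ?thesis using le.hyps by simp
  next
    case False
    then have "j = i" using le.hyps by simp
    show ?thesis
    proof (cases "i < r")
      case True
      then have "X i - real (w a i) \<le> level_cost X w r a i" by (simp add: level_cost_def)
      then show ?thesis using \<open>j = i\<close> le.prems(3) [OF True] by simp
    next
      case False
      then show ?thesis using \<open>j = i\<close> le.prems(1,4) by (simp add: level_cost_def)
    qed
  qed
next
  case (sym i j)
  then show ?case by (simp add: min.commute add.commute)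
qed

lemma budget_at_r_nonpos:
  assumes "int r = int s - \<lfloor>(real d - real l) / real n\<rfloor>"
  shows "real n * ((real s - real r) - (real d - real l) / real n) \<le> 0"
proof -
  have "real s - real r = of_int \<lfloor>(real d - real l) / real n\<rfloor>"
    using arg_cong [OF assms, of real_of_int] by simp
  also have "\<dots> \<le> (real d - real l) / real n" by (rule of_int_floor_le)
  finally show ?thesis by (simp add: mult_nonneg_nonpos)
qed

lemma sum_budget_ge:
  assumes "finite T" "card T = n" "n > 0" "(\<Sum>a\<in>T. m a) \<le> l"
  shows "real n ^ 2 * (real s - real d / real n)
         \<le> (\<Sum>a\<in>T. real n * ((real s - real (m a)) - (real d - real l) / real n))"
proof -
  have "real n ^ 2 * (real s - real d / real n) = real n * (real n * real s - (real d - real l)) - real n * real l"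
    using assms(3) by (simp add: field_simps power2_eq_square)
  also have "\<dots> \<le> real n * (real n * real s - (real d - real l)) - real n * real (\<Sum>a\<in>T. m a)"
    using assms(4) by (simp add: mult_left_mono del: of_nat_sum)
  also have "\<dots> = (\<Sum>a\<in>T. (real n * real s - (real d - real l)) - real n * real (m a))"
    using assms(2) by (simp add: sum_subtractf sum_distrib_left)
  also have "\<dots> = (\<Sum>a\<in>T. real n * ((real s - real (m a)) - (real d - real l) / real n))"
    using assms(3) by (intro sum.cong) (auto simp: field_simps)
  finally show ?thesis .
qed

theorem lemma6p2:
  fixes T :: "'a::field set" and d l r s n :: nat
    and Q R :: "'a poly" and g :: "'a \<Rightarrow> 'a poly" and w :: "'a \<Rightarrow> nat \<Rightarrow> nat"
  assumes "d \<ge> l"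
    and "finite T" and "card T = n"
    and "int r = int s - \<lfloor>(real d - real l) / real n\<rfloor>"
    and "degree Q \<le> l" and "degree R \<le> l"
    and "\<forall>a\<in>T. g a = 0 \<or> degree (g a) < r"
    and "\<forall>a\<in>T. \<forall>i<r. real (w a i) \<le> real n / 2 * ((real s - real i) - (real d - real l) / real n)"
    and "Q \<noteq> R"
  shows "Gamma T r s d l w g Q + Gamma T r s d l w g R \<ge> real n ^ 2 * (real s - real d / real n)"
proof (cases "n = 0")
  case True
  then show ?thesis using assms(2,3) by (simp add: Gamma_def A_set_def)
next
  case False
  define X where "X k = real n * ((real s - real k) - (real d - real l) / real n)" for k :: nat
  define m where "m a = min (agree_level g Q r a) (agree_level g R r a)" for a
  have "(\<Sum>a\<in>T. m a) \<le> degree (Q - R)"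
    using assms(9,2) by (rule sum_common_agreement_le_degree [where f = g])
      (simp_all add: m_def monom_dvd_if_le_agree_level [OF min.cobounded1]
        monom_dvd_if_le_agree_level [OF min.cobounded2])
  also have "\<dots> \<le> l" using degree_diff_le assms(5,6) by blast
  finally have "real n ^ 2 * (real s - real d / real n) \<le> (\<Sum>a\<in>T. X (m a))"
    unfolding X_def using assms(2,3) False by (intro sum_budget_ge) auto
  also have "\<dots> \<le> (\<Sum>a\<in>T. level_cost X w r a (agree_level g Q r a)
                      + level_cost X w r a (agree_level g R r a))"
    unfolding m_def
  proof (intro sum_mono level_cost_pair_ge agree_level_le)
    show "2 * real (w a k) \<le> X k" if "a \<in> T" "k < r" for a k
      using assms(8) that by (simp add: X_def mult.commute)
    show "X r \<le> 0" unfolding X_def using assms(4) by (rule budget_at_r_nonpos)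
  qed
  also have "\<dots> = Gamma T r s d l w g Q + Gamma T r s d l w g R"
    using Gamma_eq_sum_level_cost [OF assms(2)]
    by (simp add: sum.distrib X_def [abs_def] assms(3))
  finally show ?thesis .
qed

end
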